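(* Let $V$ be a finite dimensional vector space over a field $\mathbb{K}$ of characteristic zero, and let $z$ be an element of $V\setminus\{0\}$ or of $\wedge^2V\setminus\{0\}$. Then $$\{u\in\widehat T\otimes\widehat T:\ [\Delta z,u]=0\}=\mathbb{K}[[z]]\otimes\mathbb{K}[[z]].$$
   Context: $\widehat T=\widehat T(V)=\prod_{m\ge0}V^{\otimes m}$ is the completed tensor algebra, with coproduct $\Delta$ for which elements of $V$ are primitive, so $\Delta z=z\otimes1+1\otimes z$; $\wedge^2V$ is viewed inside $V^{\otimes2}$ as antisymmetric tensors. Tensor products of completed algebras are the completed tensor products, and $\mathbb{K}[[z]]\subset\widehat T$ is the set of series $\sum_k c_kz^k$, $c_k\in\mathbb{K}$. *)

theory Defs
  imports Main
begin

text \<open>V has a finite basis indexed by the finite type 'b, so the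
completed tensor algebra is the algebra of noncommutative formal power series
'b list => 'k (coefficient of each word), and the completed tensor product
of two copies is 'b list * 'b list => 'k.\<close>

type_synonym ('b, 'k) tser = "'b list \<Rightarrow> 'k"
type_synonym ('b, 'k) tser2 = "'b list \<times> 'b list \<Rightarrow> 'k"

definition one1 :: "('b, 'k::field) tser" where
  "one1 w = (if w = [] then 1 else 0)"

definition mult1 :: "('b, 'k::field) tser \<Rightarrow> ('b, 'k) tser \<Rightarrow> ('b, 'k) tser" where
  "mult1 f g w = (\<Sum>i\<le>length w. f (take i w) * g (drop i w))"

primrec pow1 :: "('b, 'k::field) tser \<Rightarrow> nat \<Rightarrow> ('b, 'k) tser" where
  "pow1 z 0 = one1"
| "pow1 z (Suc n) = mult1 z (pow1 z n)"

text \<open>Product in the completed tensor product (a(x)b)(c(x)d) = ac (x) bd.\<close>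
definition mult2 :: "('b, 'k::field) tser2 \<Rightarrow> ('b, 'k) tser2 \<Rightarrow> ('b, 'k) tser2" where
  "mult2 f g uv = (\<Sum>i\<le>length (fst uv). \<Sum>j\<le>length (snd uv).
      f (take i (fst uv), take j (snd uv)) * g (drop i (fst uv), drop j (snd uv)))"

fun shuffle_count :: "'a list \<Rightarrow> 'a list \<Rightarrow> 'a list \<Rightarrow> nat" where
  "shuffle_count [] ys zs = (if ys = zs then 1 else 0)"
| "shuffle_count (x # xs) [] zs = (if x # xs = zs then 1 else 0)"
| "shuffle_count (x # xs) (y # ys) [] = 0"
| "shuffle_count (x # xs) (y # ys) (z # zs) =
     (if x = z then shuffle_count xs (y # ys) zs else 0) +
     (if y = z then shuffle_count (x # xs) ys zs else 0)"

text \<open>The coproduct for which elements of V are primitive (shuffle coproduct):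
Delta(w) = sum over splittings of the positions of w into two subwords u (x) v.\<close>
definition Delta :: "('b, 'k::field) tser \<Rightarrow> ('b, 'k) tser2" where
  "Delta f uv = (\<Sum>w\<in>shuffles (fst uv) (snd uv).
      of_nat (shuffle_count (fst uv) (snd uv) w) * f w)"

text \<open>Elements of V and of wedge^2 V (antisymmetric tensors in V(x)V) inside T-hat.\<close>
definition in_V :: "('b, 'k::field) tser \<Rightarrow> bool" where
  "in_V z \<longleftrightarrow> (\<forall>w. length w \<noteq> 1 \<longrightarrow> z w = 0)"

definition in_wedge2 :: "('b, 'k::field) tser \<Rightarrow> bool" where
  "in_wedge2 z \<longleftrightarrow> (\<forall>w. length w \<noteq> 2 \<longrightarrow> z w = 0) \<and> (\<forall>a b. z [a, b] = - z [b, a])"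

text \<open>The element sum_{k,l} c k l * z^k (x) z^l of K[[z]] (x)^ K[[z]]; for z without
constant term, z^k vanishes on words of length < k, so the sums are finite.\<close>
definition pser2 :: "(nat \<Rightarrow> nat \<Rightarrow> 'k::field) \<Rightarrow> ('b, 'k) tser \<Rightarrow> ('b, 'k) tser2" where
  "pser2 c z uv = (\<Sum>k\<le>length (fst uv). \<Sum>l\<le>length (snd uv).
      c k l * pow1 z k (fst uv) * pow1 z l (snd uv))"

end

theory Submission
  imports Defs
begin

(* For z in V or in wedge^2 V the coproduct is Delta z = z (x) 1 + 1 (x) z, so u commutes with it
   iff [z, u(-, v)](x) + [z, u(x, -)](v) = 0 for all words x, v.  Splitting v = c e = a b with
   |c| = |b| = deg z turns this into: ad_z of the column u(-, v) is a combination of the shorter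
   columns u(-, a) and u(-, e).  By induction on |v| every column is killed by ad_z^2, hence by
   ad_z: [z, g] then lies in the centralizer K[[z]] of z and vanishes on every power p^k of a word
   with z(p) /= 0, so all its coefficients are 0.  Thus all columns and rows lie in K[[z]].
   The centralizer is computed degree by degree: if f commutes with z, comparing [z, f] at p a b
   gives f(a b) = f(p a) / z(p) * z(b), and the left quotient f(p -) / z(p) commutes with z again;
   below the degree of z nothing commutes with z (for wedge^2 V by antisymmetry, char /= 2). *)

definition commutator :: "('b, 'k::field) tser \<Rightarrow> ('b, 'k) tser \<Rightarrow> ('b, 'k) tser" where
  "commutator f g w = mult1 f g w - mult1 g f w"

lemma commutator_scaled_diff:
  "commutator f (\<lambda>w. \<alpha> * g w - \<beta> * h w) w = \<alpha> * commutator f g w - \<beta> * commutator f h w"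
  unfolding commutator_def mult1_def
  by (simp add: sum_subtractf sum_distrib_left algebra_simps)

lemma mult1_one_right: "mult1 f one1 w = f w"
  unfolding mult1_def one1_def by (subst sum.remove[of _ "length w"]) auto

lemma split_at_both_ends:
  assumes "d \<le> length w"
  obtains c e a b where "w = c @ e" "w = a @ b" "length c = d" "length b = d"
    "length e = length w - d" "length a = length w - d"
proof -
  let ?k = "length w - d"
  have "length (take d w) = d" "length (drop ?k w) = d" using assms by simp_all
  moreover have "length (drop d w) = ?k" "length (take ?k w) = ?k" by simp_all
  ultimately show thesis
    using that[of "take d w" "drop d w" "take ?k w" "drop ?k w"] by (simp only: append_take_drop_id)
qed

definition prim_coproduct :: "('b, 'k::field) tser \<Rightarrow> ('b, 'k) tser2" where
  "prim_coproduct z = (\<lambda>(x, v). (if v = [] then z x else 0) + (if x = [] then z v else 0))"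

lemma mult2_prim_coproduct_left:
  "mult2 (prim_coproduct z) u (x, v) = mult1 z (\<lambda>y. u (y, v)) x + mult1 z (\<lambda>y. u (x, y)) v"
proof -
  have "mult2 (prim_coproduct z) u (x, v) = (\<Sum>i\<le>length x. \<Sum>j\<le>length v.
      (if j = 0 then z (take i x) * u (drop i x, drop j v) else 0) +
      (if i = 0 then z (take j v) * u (drop i x, drop j v) else 0))"
    unfolding mult2_def prim_coproduct_def by (intro sum.cong refl) (auto simp: distrib_right)
  then show ?thesis
    unfolding mult1_def by (simp add: sum.distrib sum.swap[of _ "{..length v}"] sum.delta)
qed

lemma mult2_prim_coproduct_right:
  "mult2 u (prim_coproduct z) (x, v) = mult1 (\<lambda>y. u (y, v)) z x + mult1 (\<lambda>y. u (x, y)) z v"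
proof -
  have "mult2 u (prim_coproduct z) (x, v) = (\<Sum>i\<le>length x. \<Sum>j\<le>length v.
      (if j = length v then u (take i x, take j v) * z (drop i x) else 0) +
      (if i = length x then u (take i x, take j v) * z (drop j v) else 0))"
    unfolding mult2_def prim_coproduct_def by (intro sum.cong refl) (auto simp: distrib_left)
  then show ?thesis
    unfolding mult1_def by (simp add: sum.distrib sum.swap[of _ "{..length v}"] sum.delta)
qed

lemma commutes_with_prim_coproduct_iff:
  "mult2 (prim_coproduct z) u = mult2 u (prim_coproduct z) \<longleftrightarrow>
   (\<forall>x v. commutator z (\<lambda>y. u (y, v)) x + commutator z (\<lambda>y. u (x, y)) v = 0)"
  by (auto simp: fun_eq_iff commutator_def mult2_prim_coproduct_left mult2_prim_coproduct_right
      algebra_simps)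

lemma Delta_Nil_right: "Delta f (x, []) = f x"
  by (cases x) (simp_all add: Delta_def)

lemma Delta_Nil_left: "Delta f ([], v) = f v"
  by (simp add: Delta_def)

lemma Delta_eq_0_if:
  assumes "\<And>w. length w = length x + length v \<Longrightarrow> f w = 0"
  shows "Delta f (x, v) = 0"
  unfolding Delta_def using assms by (intro sum.neutral) (auto simp: length_shuffles)

lemma Delta_singletons: "Delta f ([a], [b]) = f [a, b] + f [b, a]"
proof (cases "a = b")
  case True
  then show ?thesis by (simp add: Delta_def)
next
  case False
  then have "shuffles [a] [b] = {[a, b], [b, a]}" by auto
  then show ?thesis using False by (simp add: Delta_def)
qed

lemma Delta_eq_prim_coproduct:
  fixes z :: "('b, 'k::field) tser"
  assumes "in_V z \<or> in_wedge2 z"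
  shows "Delta z = prim_coproduct z"
proof (intro ext, clarify)
  fix x v :: "'b list"
  have low_degree: "z w = 0" if "length w \<notin> {1, 2}" for w
    using assms that unfolding in_V_def in_wedge2_def by blast
  have pairs: "z [a, b] + z [b, a] = 0" for a b
  proof (cases "in_V z")
    case True
    then show ?thesis by (simp add: in_V_def)
  next
    case False
    then have "z [a, b] = - z [b, a]" using assms unfolding in_wedge2_def by blast
    then show ?thesis by simp
  qed
  consider "x = [] \<or> v = []" | a b where "x = [a]" "v = [b]" | "2 < length x + length v"
    by (cases x; cases v) auto
  then show "Delta z (x, v) = prim_coproduct z (x, v)"
  proof cases
    case 1
    then show ?thesis
      using low_degree[of "[]"] by (auto simp: prim_coproduct_def Delta_Nil_left Delta_Nil_right)
  next
    case 2
    then show ?thesis using pairs by (simp add: Delta_singletons prim_coproduct_def)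
  next
    case 3
    then show ?thesis using low_degree by (auto simp: prim_coproduct_def intro!: Delta_eq_0_if)
  qed
qed

locale homogeneous_series =
  fixes z :: "('b, 'k::field) tser" and d :: nat
  assumes homogeneous: "\<And>w. length w \<noteq> d \<Longrightarrow> z w = 0"
begin

lemma mult1_left: "d \<le> length w \<Longrightarrow> mult1 z f w = z (take d w) * f (drop d w)"
proof -
  assume "d \<le> length w"
  moreover have "z (take i w) = 0" if "i \<noteq> d" "i \<le> length w" for i
    using that by (intro homogeneous) simp
  ultimately show ?thesis
    unfolding mult1_def by (subst sum.remove[of _ d]) (auto intro!: sum.neutral)
qed

lemma mult1_right:
  "d \<le> length w \<Longrightarrow> mult1 f z w = f (take (length w - d) w) * z (drop (length w - d) w)"
proof -
  assume "d \<le> length w"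
  moreover have "z (drop i w) = 0" if "i \<noteq> length w - d" "i \<le> length w" for i
    using that by (intro homogeneous) auto
  ultimately show ?thesis
    unfolding mult1_def by (subst sum.remove[of _ "length w - d"]) (auto intro!: sum.neutral)
qed

lemma mult1_left_append: "length a = d \<Longrightarrow> mult1 z f (a @ b) = z a * f b"
  by (simp add: mult1_left)

lemma mult1_right_append: "length b = d \<Longrightarrow> mult1 f z (a @ b) = f a * z b"
  by (simp add: mult1_right)

lemma mult1_left_short: "length w < d \<Longrightarrow> mult1 z f w = 0"
  unfolding mult1_def by (auto simp: homogeneous intro!: sum.neutral)

lemma mult1_right_short: "length w < d \<Longrightarrow> mult1 f z w = 0"
  unfolding mult1_def by (auto simp: homogeneous intro!: sum.neutral)

lemma commutator_short: "length w < d \<Longrightarrow> commutator z f w = 0"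
  by (simp add: commutator_def mult1_left_short mult1_right_short)

lemma commutator_append:
  "length c = d \<Longrightarrow> length b = d \<Longrightarrow> c @ e = a @ b \<Longrightarrow>
   commutator z f (c @ e) = z c * f e - f a * z b"
  by (metis commutator_def mult1_left_append mult1_right_append)

lemma pow1_Suc_short: "length w < d \<Longrightarrow> pow1 z (Suc k) w = 0"
  by (simp add: mult1_left_short)

lemma length_if_pow1_nonzero: "pow1 z k w \<noteq> 0 \<Longrightarrow> length w = k * d"
proof (induction k arbitrary: w)
  case 0
  then show ?case by (simp add: one1_def split: if_splits)
next
  case (Suc k)
  then have "d \<le> length w" using pow1_Suc_short by force
  from Suc.prems this have "pow1 z k (drop d w) \<noteq> 0" by (simp add: mult1_left)
  then have "length (drop d w) = k * d" by (rule Suc.IH)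
  with \<open>d \<le> length w\<close> show ?case by simp
qed

lemma pow1_Suc_append_right: "length b = d \<Longrightarrow> pow1 z (Suc k) (a @ b) = pow1 z k a * z b"
proof (induction k arbitrary: a)
  case 0
  then show ?case
    by (cases "a = []") (auto simp: mult1_one_right one1_def homogeneous)
next
  case (Suc k)
  show ?case
  proof (cases "length a < d")
    case True
    then have "length (a @ b) \<noteq> Suc (Suc k) * d" using Suc.prems by simp
    then have "pow1 z (Suc (Suc k)) (a @ b) = 0" using length_if_pow1_nonzero by blast
    moreover have "pow1 z (Suc k) a = 0" using True by (rule pow1_Suc_short)
    ultimately show ?thesis by simp
  next
    case False
    then obtain c e where "a = c @ e" "length c = d"
      by (metis append_take_drop_id le_eq_less_or_eq length_take linorder_not_le min_absorb2)
    with Suc show ?thesis by (simp add: mult1_left_append)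
  qed
qed

end

text \<open>The last assumption excludes proper powers: the centralizer of z = a a contains a.\<close>
locale centralizer_generator = homogeneous_series z d for z :: "('b, 'k::field) tser" and d +
  assumes degree_pos: "0 < d"
    and nonzero: "z \<noteq> (\<lambda>_. 0)"
    and no_low_degree_commutant: "\<And>f n w. 0 < n \<Longrightarrow> n < d \<Longrightarrow>
      \<forall>w'. length w' = n + d \<longrightarrow> commutator z f w' = 0 \<Longrightarrow> length w = n \<Longrightarrow> f w = 0"
begin

lemma pow1_eq_0_if: "k \<noteq> length w div d \<Longrightarrow> pow1 z k w = 0"
  using length_if_pow1_nonzero degree_pos by fastforce

definition support_word :: "'b list" where
  "support_word = (SOME w. z w \<noteq> 0)"

lemma z_support_word: "z support_word \<noteq> 0"
  unfolding support_word_def using nonzero by (metis (mono_tags) someI_ex)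

lemma length_support_word: "length support_word = d"
  using z_support_word homogeneous by blast

definition support_power :: "nat \<Rightarrow> 'b list" where
  "support_power k = concat (replicate k support_word)"

lemma support_power_Suc: "support_power (Suc k) = support_word @ support_power k"
  by (simp add: support_power_def)

lemma support_power_Suc_right: "support_power (Suc k) = support_power k @ support_word"
  unfolding support_power_def by (induction k) simp_all

lemma commutator_support_power: "commutator z f (support_power k) = 0"
proof (cases k)
  case 0
  then show ?thesis using degree_pos by (simp add: support_power_def commutator_short)
next
  case (Suc j)
  then show ?thesis
    using commutator_append[of support_word support_word "support_power j" "support_power j" f]
    by (simp add: length_support_word support_power_Suc flip: support_power_Suc_right)
qed

definition power_series :: "(nat \<Rightarrow> 'k) \<Rightarrow> ('b, 'k) tser" where
  "power_series a w = a (length w div d) * pow1 z (length w div d) w"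

definition series_coeff :: "('b, 'k) tser \<Rightarrow> nat \<Rightarrow> 'k" where
  "series_coeff f k = f (support_power k) / z support_word ^ k"

definition left_quotient :: "('b, 'k) tser \<Rightarrow> ('b, 'k) tser" where
  "left_quotient f a = f (support_word @ a) / z support_word"

lemma series_coeff_left_quotient: "series_coeff (left_quotient f) k = series_coeff f (Suc k)"
  by (simp add: series_coeff_def left_quotient_def support_power_Suc)

lemma append_eq_left_quotient:
  assumes "\<forall>w. length w = n + d \<longrightarrow> commutator z f w = 0" "length a + d = n" "length b = d"
  shows "f (a @ b) = left_quotient f a * z b"
proof -
  have "z support_word * f (a @ b) - f (support_word @ a) * z b
      = commutator z f (support_word @ (a @ b))"
    using commutator_append[of support_word b "a @ b" "support_word @ a"] assms(3)
    by (simp add: length_support_word)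
  also have "\<dots> = 0" using assms by (simp add: length_support_word)
  finally show ?thesis
    using z_support_word by (simp add: left_quotient_def field_simps)
qed

lemma left_quotient_commutes:
  assumes "\<forall>w. length w = n + d \<longrightarrow> commutator z f w = 0" "d \<le> n"
  shows "\<forall>w. length w = (n - d) + d \<longrightarrow> commutator z (left_quotient f) w = 0"
proof (intro allI impI)
  fix w :: "'b list"
  assume "length w = (n - d) + d"
  with assms(2) obtain c e a b where w: "w = c @ e" "w = a @ b" "length c = d" "length b = d"
    "length e = n - d" "length a = n - d"
    by (metis split_at_both_ends le_add2 add_diff_cancel_right')
  let ?p = support_word
  have "z c * f (e @ ?p) - f w * z ?p = commutator z f (c @ (e @ ?p))"
    using commutator_append[of c ?p "e @ ?p" w] w by (simp add: length_support_word)
  also have "\<dots> = 0" using assms w by (simp add: length_support_word)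
  finally have "(z c * left_quotient f e - left_quotient f a * z b) * z ?p = 0"
    using append_eq_left_quotient[OF assms(1), of e ?p] append_eq_left_quotient[OF assms(1), of a b]
      w assms(2) by (simp add: length_support_word algebra_simps)
  then show "commutator z (left_quotient f) w = 0"
    using commutator_append[of c b e a] w z_support_word by simp
qed

lemma commuting_component_eq_power_series:
  assumes "\<forall>w'. length w' = n + d \<longrightarrow> commutator z f w' = 0" and "length w = n"
  shows "f w = power_series (series_coeff f) w"
  using assms
proof (induction n arbitrary: f w rule: less_induct)
  case (less n)
  consider "n = 0" | "0 < n" "n < d" | "d \<le> n" by linarith
  then show ?case
  proof cases
    case 1
    then show ?thesis
      using less.prems by (simp add: power_series_def series_coeff_def support_power_def one1_def)
  next
    case 2
    then have "f w = 0" using no_low_degree_commutant less.prems by blast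
    moreover have "pow1 z 0 w = 0" using 2 less.prems by (auto simp: one1_def)
    ultimately show ?thesis using 2 less.prems by (simp add: power_series_def)
  next
    case 3
    define m where "m = (n - d) div d"
    have "n div d = Suc m" using 3 degree_pos unfolding m_def by (simp add: le_div_geq)
    from 3 less.prems(2) have "d \<le> length w" by simp
    then obtain c e a b where w: "w = c @ e" "w = a @ b" "length c = d" "length b = d"
      "length e = length w - d" "length a = length w - d"
      by (rule split_at_both_ends)
    have "n - d < n" using 3 degree_pos by simp
    then have "left_quotient f a = power_series (series_coeff (left_quotient f)) a"
      using less.IH left_quotient_commutes[OF less.prems(1) 3] w(6) less.prems(2) by simp
    then have "left_quotient f a = series_coeff f (Suc m) * pow1 z m a"
      using w(6) less.prems(2) by (simp add: power_series_def series_coeff_left_quotient m_def)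
    moreover have "f w = left_quotient f a * z b"
      using append_eq_left_quotient[OF less.prems(1)] w(2,4,6) 3 less.prems(2) by simp
    ultimately show ?thesis
      using w(2,4) less.prems(2) \<open>n div d = Suc m\<close> pow1_Suc_append_right[of b m a]
      by (simp add: power_series_def)
  qed
qed

lemma power_series_if_commuting: "(\<And>w. commutator z f w = 0) \<Longrightarrow> f = power_series (series_coeff f)"
  using commuting_component_eq_power_series by blast

lemma commutator_power_series: "commutator z (power_series a) w = 0"
proof (cases "length w < d")
  case True
  then show ?thesis by (rule commutator_short)
next
  case False
  then have "d \<le> length w" by simp
  then obtain c e a' b where w: "w = c @ e" "w = a' @ b" "length c = d" "length b = d"
    "length e = length w - d" "length a' = length w - d"
    by (rule split_at_both_ends)
  define k where "k = (length w - d) div d"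
  have "commutator z (power_series a) w = z c * power_series a e - power_series a a' * z b"
    using commutator_append[of c b e a' "power_series a"] w(1-4) by simp
  also have "\<dots> = a k * (z c * pow1 z k e - pow1 z k a' * z b)"
    using w(5,6) unfolding power_series_def k_def by (simp add: algebra_simps)
  also have "z c * pow1 z k e = pow1 z k a' * z b"
    using w(1-4) pow1_Suc_append_right[of b k a'] by (simp add: mult1_left_append)
  finally show ?thesis by simp
qed

lemma commutator_eq_0_if_commutes_with_commutator:
  assumes "\<And>w. commutator z (commutator z g) w = 0"
  shows "commutator z g w = 0"
proof -
  have "commutator z g = power_series (series_coeff (commutator z g))"
    using assms by (rule power_series_if_commuting)
  moreover have "series_coeff (commutator z g) k = 0" for k
    by (simp add: series_coeff_def commutator_support_power)
  ultimately show ?thesis by (metis mult_zero_left power_series_def)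
qed

lemma columns_commute:
  assumes "\<And>x v. commutator z (\<lambda>y. u (y, v)) x + commutator z (\<lambda>y. u (x, y)) v = 0"
  shows "commutator z (\<lambda>y. u (y, v)) x = 0"
proof (induction "length v" arbitrary: v x rule: less_induct)
  case less
  show ?case
  proof (cases "length v < d")
    case True
    then show ?thesis using assms[where x = x and v = v] commutator_short[of v] by simp
  next
    case False
    then have "d \<le> length v" by simp
    then obtain c e a b where v: "v = c @ e" "v = a @ b" "length c = d" "length b = d"
      by (rule split_at_both_ends)
    have column: "commutator z (\<lambda>y. u (y, v)) = (\<lambda>x. z b * u (x, a) - z c * u (x, e))"
    proof
      fix x
      have "commutator z (\<lambda>y. u (y, v)) x = - commutator z (\<lambda>y. u (x, y)) v"
        using assms[where x = x and v = v] by (simp add: eq_neg_iff_add_eq_0)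
      also have "\<dots> = - (z c * u (x, e) - u (x, a) * z b)"
        using commutator_append[of c b e a] v by simp
      finally show "commutator z (\<lambda>y. u (y, v)) x = z b * u (x, a) - z c * u (x, e)"
        by (simp add: algebra_simps)
    qed
    have "length v = length a + d" using v(2,4) by simp
    moreover have "length v = d + length e" using v(1,3) by simp
    ultimately have "length a < length v" "length e < length v" using degree_pos by simp_all
    then have "commutator z (commutator z (\<lambda>y. u (y, v))) x' = 0" for x'
      unfolding column commutator_scaled_diff by (simp add: less.hyps)
    then show ?thesis by (rule commutator_eq_0_if_commutes_with_commutator)
  qed
qed

lemma pser2_eq:
  "pser2 c z (x, v) = c (length x div d) (length v div d)
     * pow1 z (length x div d) x * pow1 z (length v div d) v"
proof -
  define K where "K = length x div d"
  define L where "L = length v div d"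
  have "K \<le> length x" "L \<le> length v" unfolding K_def L_def by simp_all
  have "(\<Sum>l\<le>length v. c k l * pow1 z k x * pow1 z l v) = c k L * pow1 z k x * pow1 z L v" for k
    using \<open>L \<le> length v\<close>
    by (subst sum.mono_neutral_right[of _ "{L}"]) (auto simp: L_def pow1_eq_0_if)
  then have "pser2 c z (x, v) = (\<Sum>k\<le>length x. c k L * pow1 z k x * pow1 z L v)"
    by (simp add: pser2_def)
  also have "\<dots> = c K L * pow1 z K x * pow1 z L v"
    using \<open>K \<le> length x\<close>
    by (subst sum.mono_neutral_right[of _ "{K}"]) (auto simp: K_def pow1_eq_0_if)
  finally show ?thesis unfolding K_def L_def .
qed

lemma pser2_commutes: "mult2 (prim_coproduct z) (pser2 c z) = mult2 (pser2 c z) (prim_coproduct z)"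
proof -
  have "(\<lambda>y. pser2 c z (y, v)) =
      power_series (\<lambda>k. c k (length v div d) * pow1 z (length v div d) v)"
    "(\<lambda>y. pser2 c z (x, y)) =
      power_series (\<lambda>l. c (length x div d) l * pow1 z (length x div d) x)"
    for x v by (simp_all add: fun_eq_iff pser2_eq power_series_def algebra_simps)
  then show ?thesis
    unfolding commutes_with_prim_coproduct_iff by (simp add: commutator_power_series)
qed

definition series_coeff2 :: "('b, 'k) tser2 \<Rightarrow> nat \<Rightarrow> nat \<Rightarrow> 'k" where
  "series_coeff2 u k l =
     u (support_power k, support_power l) / (z support_word ^ k * z support_word ^ l)"

lemma commuting_eq_pser2:
  assumes "mult2 (prim_coproduct z) u = mult2 u (prim_coproduct z)"
  shows "u = pser2 (series_coeff2 u) z"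
proof -
  have commutes: "commutator z (\<lambda>y. u (y, v)) x + commutator z (\<lambda>y. u (x, y)) v = 0" for x v
    using assms by (simp add: commutes_with_prim_coproduct_iff)
  then have columns: "\<And>x v. commutator z (\<lambda>y. u (y, v)) x = 0" by (rule columns_commute)
  then have rows: "commutator z (\<lambda>y. u (x, y)) v = 0" for x v using commutes by (metis add_0)
  show ?thesis
  proof (intro ext, clarify)
    fix x v :: "'b list"
    define K where "K = length x div d"
    define L where "L = length v div d"
    have "u (x, v) = u (support_power K, v) / z support_word ^ K * pow1 z K x"
      using fun_cong[OF power_series_if_commuting[OF columns[where v = v]], of x]
      by (simp add: power_series_def series_coeff_def K_def)
    also have "u (support_power K, v)
        = u (support_power K, support_power L) / z support_word ^ L * pow1 z L v"
      using fun_cong[OF power_series_if_commuting[OF rows[where x = "support_power K"]], of v]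
      by (simp add: power_series_def series_coeff_def L_def)
    finally show "u (x, v) = pser2 (series_coeff2 u) z (x, v)"
      by (simp add: pser2_eq series_coeff2_def K_def L_def mult_ac)
  qed
qed

theorem commutant_prim_coproduct:
  "{u. mult2 (prim_coproduct z) u = mult2 u (prim_coproduct z)} = {pser2 c z | c. True}"
  using commuting_eq_pser2 pser2_commutes by blast

end

lemma centralizer_generator_in_V:
  assumes "in_V z" "z \<noteq> (\<lambda>_. 0)"
  shows "centralizer_generator z 1"
  using assms by unfold_locales (auto simp: in_V_def)

lemma centralizer_generator_in_wedge2:
  fixes z :: "('b, 'k::field_char_0) tser"
  assumes "in_wedge2 z" "z \<noteq> (\<lambda>_. 0)"
  shows "centralizer_generator z 2"
proof
  have homogeneous: "length w \<noteq> 2 \<Longrightarrow> z w = 0" for w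
    using assms(1) unfolding in_wedge2_def by blast
  have antisymmetric: "z [a, b] = - z [b, a]" for a b
    using assms(1) unfolding in_wedge2_def by blast
  show "length w \<noteq> 2 \<Longrightarrow> z w = 0" for w by (rule homogeneous)
  show "z \<noteq> (\<lambda>_. 0)" by (rule assms(2))
  fix f :: "('b, 'k) tser" and n and w :: "'b list"
  assume "0 < n" "n < 2" and commutes: "\<forall>w'. length w' = n + 2 \<longrightarrow> commutator z f w' = 0"
    and "length w = n"
  have "length w = 1" using \<open>0 < n\<close> \<open>n < 2\<close> \<open>length w = n\<close> by simp
  then obtain t where w: "w = [t]" by (auto simp: length_Suc_conv)
  interpret homogeneous_series z 2 by unfold_locales (rule homogeneous)
  have exchange: "z [x, y] * f [s] = f [x] * z [y, s]" for x y s
    using commutes \<open>0 < n\<close> \<open>n < 2\<close> commutator_append[of "[x, y]" "[y, s]" "[s]" "[x]" f] by simp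
  show "f w = 0"
  proof (rule ccontr)
    assume "f w \<noteq> 0"
    have "z [t, y] = 0" for y
      using exchange[of t y t] antisymmetric[of y t] \<open>f w \<noteq> 0\<close> w by simp
    then have z_pairs: "z [y, s] = 0" for y s
      using exchange[of t y s] \<open>f w \<noteq> 0\<close> w by simp
    have "z w' = 0" for w'
    proof (cases "length w' = 2")
      case True
      then obtain y s where "w' = [y, s]"
        by (metis One_nat_def Suc_1 length_0_conv length_Suc_conv)
      then show ?thesis using z_pairs by simp
    qed (rule homogeneous)
    then have "z = (\<lambda>_. 0)" by blast
    then show False using assms(2) by contradiction
  qed
qed simp

theorem lemma3p6:
  fixes z :: "'b::finite list \<Rightarrow> 'k::field_char_0"
  assumes "(in_V z \<and> z \<noteq> (\<lambda>_. 0)) \<or> (in_wedge2 z \<and> z \<noteq> (\<lambda>_. 0))"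
  shows "{u. mult2 (Delta z) u = mult2 u (Delta z)} = {pser2 c z | c. True}"
proof -
  from assms consider "centralizer_generator z 1" | "centralizer_generator z 2"
    using centralizer_generator_in_V centralizer_generator_in_wedge2 by blast
  then have "{u. mult2 (prim_coproduct z) u = mult2 u (prim_coproduct z)} = {pser2 c z | c. True}"
    by cases (rule centralizer_generator.commutant_prim_coproduct; assumption)+
  moreover have "Delta z = prim_coproduct z"
    using assms by (intro Delta_eq_prim_coproduct) blast
  ultimately show ?thesis by simp
qed

end
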